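(* In the algebra $\mathcal O_q$ defined in the context, for all $n\in\mathbb N$: $$\mathcal W_{n+1}=-(q-q^{-1})^{-1}\sum_{k=0}^n\sum_{\ell=0}^k\binom{k}{\ell}q^{k-2\ell}[2]_q^{-k-2}\tilde B_{(k-2\ell)\delta+\alpha_0}\mathcal G_{n-k},$$ $$\mathcal W_{-n}=-(q-q^{-1})^{-1}\sum_{k=0}^n\sum_{\ell=0}^k\binom{k}{\ell}q^{2\ell-k}[2]_q^{-k-2}\tilde B_{(k-2\ell)\delta+\alpha_1}\mathcal G_{n-k}.$$
   Context: All algebras are associative and unital over a field $\mathbb F$; $q\in\mathbb F$ is nonzero and not a root of unity; $[n]_q=(q^n-q^{-n})/(q-q^{-1})$. For elements $X,Y$ of an algebra, $[X,Y]=XY-YX$ and $[X,Y]_q=qXY-q^{-1}YX$. Let $\rho=-(q^2-q^{-2})^2$. The algebra $\mathcal O_q$ is defined by generators $\mathcal W_{-k},\mathcal W_{k+1},\mathcal G_{k+1},\tilde{\mathcal G}_{k+1}$ ($k\in\mathbb N$) and the following relations for all $k,\ell\in\mathbb N$: $[\mathcal W_0,\mathcal W_{k+1}]=[\mathcal W_{-k},\mathcal W_1]=(\tilde{\mathcal G}_{k+1}-\mathcal G_{k+1})/(q+q^{-1})$; $[\mathcal W_0,\mathcal G_{k+1}]_q=[\tilde{\mathcal G}_{k+1},\mathcal W_0]_q=\rho\mathcal W_{-k-1}-\rho\mathcal W_{k+1}$; $[\mathcal G_{k+1},\mathcal W_1]_q=[\mathcal W_1,\tilde{\mathcal G}_{k+1}]_q=\rho\mathcal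 W_{k+2}-\rho\mathcal W_{-k}$; $[\mathcal W_{-k},\mathcal W_{-\ell}]=0$, $[\mathcal W_{k+1},\mathcal W_{\ell+1}]=0$; $[\mathcal W_{-k},\mathcal W_{\ell+1}]+[\mathcal W_{k+1},\mathcal W_{-\ell}]=0$; $[\mathcal W_{-k},\mathcal G_{\ell+1}]+[\mathcal G_{k+1},\mathcal W_{-\ell}]=0$; $[\mathcal W_{-k},\tilde{\mathcal G}_{\ell+1}]+[\tilde{\mathcal G}_{k+1},\mathcal W_{-\ell}]=0$; $[\mathcal W_{k+1},\mathcal G_{\ell+1}]+[\mathcal G_{k+1},\mathcal W_{\ell+1}]=0$; $[\mathcal W_{k+1},\tilde{\mathcal G}_{\ell+1}]+[\tilde{\mathcal G}_{k+1},\mathcal W_{\ell+1}]=0$; $[\mathcal G_{k+1},\mathcal G_{\ell+1}]=0$, $[\tilde{\mathcal G}_{k+1},\tilde{\mathcal G}_{\ell+1}]=0$; $[\tilde{\mathcal G}_{k+1},\mathcal G_{\ell+1}]+[\mathcal G_{k+1},\tilde{\mathcal G}_{\ell+1}]=0$. Convention: $\mathcal G_0=-(q-q^{-1})[2]_q^2$. Define $\tilde B_\delta=q^{-2}\mathcal W_0\mathcal W_1-\mathcal W_1\mathcal W_0$; $\tilde B_{\alpha_0}=\mathcal W_1$, $\tilde B_{\delta+\alpha_0}=\mathcal W_0+\frac{q[\tilde B_\delta,\mathcal W_1]}{(q-q^{-1})(q^2-q^{-2})}$, $\tilde B_{n\delta+\alpha_0}=\tilde B_{(n-2)\delta+\alpha_0}+\frac{q[\tilde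 B_\delta,\tilde B_{(n-1)\delta+\alpha_0}]}{(q-q^{-1})(q^2-q^{-2})}$ for $n\ge2$; $\tilde B_{\alpha_1}=\mathcal W_0$, $\tilde B_{\delta+\alpha_1}=\mathcal W_1-\frac{q[\tilde B_\delta,\mathcal W_0]}{(q-q^{-1})(q^2-q^{-2})}$, $\tilde B_{n\delta+\alpha_1}=\tilde B_{(n-2)\delta+\alpha_1}-\frac{q[\tilde B_\delta,\tilde B_{(n-1)\delta+\alpha_1}]}{(q-q^{-1})(q^2-q^{-2})}$ for $n\ge2$. For negative integers $k$, set $\tilde B_{k\delta+\alpha_0}=\tilde B_{(-k-1)\delta+\alpha_1}$ and $\tilde B_{k\delta+\alpha_1}=\tilde B_{(-k-1)\delta+\alpha_0}$. *)

theory Defs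
  imports Main
begin

text \<open>An algebra over a field 'k is modelled as a ring 'a together with a unital ring
homomorphism emb : 'k -> 'a whose image is central (the structure map).\<close>

definition scalar_emb :: "('k::field \<Rightarrow> 'a::ring_1) \<Rightarrow> bool" where
  "scalar_emb emb \<longleftrightarrow> emb 1 = 1 \<and> (\<forall>x y. emb (x + y) = emb x + emb y)
     \<and> (\<forall>x y. emb (x * y) = emb x * emb y) \<and> (\<forall>x a. emb x * a = a * emb x)"

definition comm :: "'a::ring_1 \<Rightarrow> 'a \<Rightarrow> 'a" where
  "comm x y = x * y - y * x"

definition qcomm :: "('k::field \<Rightarrow> 'a::ring_1) \<Rightarrow> 'k \<Rightarrow> 'a \<Rightarrow> 'a \<Rightarrow> 'a" where
  "qcomm emb q x y = emb q * x * y - emb (inverse q) * y * x"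

definition qint :: "'k::field \<Rightarrow> nat \<Rightarrow> 'k" where
  "qint q n = (q ^ n - inverse q ^ n) / (q - inverse q)"

definition rho :: "'k::field \<Rightarrow> 'k" where
  "rho q = - ((q^2 - inverse q ^ 2) ^ 2)"

text \<open>Generators: W i for i :: int encodes W_{-k} (i = -k) and W_{k+1} (i = k+1);
  G m, Gt m (m \<ge> 1) are the generators G_m and tilde-G_m (the value at 0 is irrelevant).\<close>

definition Oq_relations ::
  "('k::field \<Rightarrow> 'a::ring_1) \<Rightarrow> 'k \<Rightarrow> (int \<Rightarrow> 'a) \<Rightarrow> (nat \<Rightarrow> 'a) \<Rightarrow> (nat \<Rightarrow> 'a) \<Rightarrow> bool" where
  "Oq_relations emb q W G Gt \<longleftrightarrow>
    (\<forall>k::nat. comm (W 0) (W (int k + 1)) = emb (inverse (qint q 2)) * (Gt (k+1) - G (k+1))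
            \<and> comm (W (- int k)) (W 1) = emb (inverse (qint q 2)) * (Gt (k+1) - G (k+1)))
  \<and> (\<forall>k::nat. qcomm emb q (W 0) (G (k+1)) = emb (rho q) * W (- int k - 1) - emb (rho q) * W (int k + 1)
            \<and> qcomm emb q (Gt (k+1)) (W 0) = emb (rho q) * W (- int k - 1) - emb (rho q) * W (int k + 1))
  \<and> (\<forall>k::nat. qcomm emb q (G (k+1)) (W 1) = emb (rho q) * W (int k + 2) - emb (rho q) * W (- int k)
            \<and> qcomm emb q (W 1) (Gt (k+1)) = emb (rho q) * W (int k + 2) - emb (rho q) * W (- int k))
  \<and> (\<forall>k l::nat.
        comm (W (- int k)) (W (- int l)) = 0
      \<and> comm (W (int k + 1)) (W (int l + 1)) = 0
      \<and> comm (W (- int k)) (W (int l + 1)) + comm (W (int k + 1)) (W (- int l)) = 0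
      \<and> comm (W (- int k)) (G (l+1)) + comm (G (k+1)) (W (- int l)) = 0
      \<and> comm (W (- int k)) (Gt (l+1)) + comm (Gt (k+1)) (W (- int l)) = 0
      \<and> comm (W (int k + 1)) (G (l+1)) + comm (G (k+1)) (W (int l + 1)) = 0
      \<and> comm (W (int k + 1)) (Gt (l+1)) + comm (Gt (k+1)) (W (int l + 1)) = 0
      \<and> comm (G (k+1)) (G (l+1)) = 0
      \<and> comm (Gt (k+1)) (Gt (l+1)) = 0
      \<and> comm (Gt (k+1)) (G (l+1)) + comm (G (k+1)) (Gt (l+1)) = 0)"

definition Gext :: "('k::field \<Rightarrow> 'a::ring_1) \<Rightarrow> 'k \<Rightarrow> (nat \<Rightarrow> 'a) \<Rightarrow> nat \<Rightarrow> 'a" where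
  "Gext emb q G m = (if m = 0 then emb (- (q - inverse q) * (qint q 2) ^ 2) else G m)"

definition Bdelta :: "('k::field \<Rightarrow> 'a::ring_1) \<Rightarrow> 'k \<Rightarrow> (int \<Rightarrow> 'a) \<Rightarrow> 'a" where
  "Bdelta emb q W = emb (inverse q ^ 2) * W 0 * W 1 - W 1 * W 0"

definition Bcoef :: "'k::field \<Rightarrow> 'k" where
  "Bcoef q = q / ((q - inverse q) * (q^2 - inverse q ^ 2))"

text \<open>Ba0 n = tilde-B_{n delta + alpha_0}, Ba1 n = tilde-B_{n delta + alpha_1} (n \<ge> 0).\<close>
fun Ba0 :: "('k::field \<Rightarrow> 'a::ring_1) \<Rightarrow> 'k \<Rightarrow> (int \<Rightarrow> 'a) \<Rightarrow> nat \<Rightarrow> 'a" where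
  "Ba0 emb q W 0 = W 1"
| "Ba0 emb q W (Suc 0) = W 0 + emb (Bcoef q) * comm (Bdelta emb q W) (W 1)"
| "Ba0 emb q W (Suc (Suc n)) = Ba0 emb q W n + emb (Bcoef q) * comm (Bdelta emb q W) (Ba0 emb q W (Suc n))"

fun Ba1 :: "('k::field \<Rightarrow> 'a::ring_1) \<Rightarrow> 'k \<Rightarrow> (int \<Rightarrow> 'a) \<Rightarrow> nat \<Rightarrow> 'a" where
  "Ba1 emb q W 0 = W 0"
| "Ba1 emb q W (Suc 0) = W 1 - emb (Bcoef q) * comm (Bdelta emb q W) (W 0)"
| "Ba1 emb q W (Suc (Suc n)) = Ba1 emb q W n - emb (Bcoef q) * comm (Bdelta emb q W) (Ba1 emb q W (Suc n))"

definition Bt0 :: "('k::field \<Rightarrow> 'a::ring_1) \<Rightarrow> 'k \<Rightarrow> (int \<Rightarrow> 'a) \<Rightarrow> int \<Rightarrow> 'a" where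
  "Bt0 emb q W k = (if k \<ge> 0 then Ba0 emb q W (nat k) else Ba1 emb q W (nat (- k - 1)))"

definition Bt1 :: "('k::field \<Rightarrow> 'a::ring_1) \<Rightarrow> 'k \<Rightarrow> (int \<Rightarrow> 'a) \<Rightarrow> int \<Rightarrow> 'a" where
  "Bt1 emb q W k = (if k \<ge> 0 then Ba1 emb q W (nat k) else Ba0 emb q W (nat (- k - 1)))"

end

theory Submission
  imports Defs
begin

(* Z = G_1 + q B_delta commutes with W_0 and W_1 (this is what the relations with k = 0 say),
   hence with every tilde-B, since these lie in the subalgebra generated by W_0 and W_1; on that
   subalgebra ad G_1 therefore acts as -q ad B_delta.  Extended to all integer indices,
   b m = tilde-B_{m delta + alpha_0} obeys the single recurrence b (m+1) - b (m-1) = c [B_delta, b m],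
   so the q-binomial sums sum_l C(k,l) q^(k-2l) b (k-2l+r) satisfy a Pascal rule in k, and the two
   coefficient sequences of the claimed expansions are linked by a first-order recurrence in k.
   Induction on n then closes: [G_{n+1}, W_1] = [G_1, W_{n+1}] is computed from the expansion of
   W_{n+1}, and the q-commutator relation [G_{n+1}, W_1]_q = rho (W_{n+2} - W_{-n}) yields W_{n+2};
   symmetrically for W_{-n-1}. *)

lemma comm_add_right: "comm x (y + z) = comm x y + comm x z"
  unfolding comm_def by (simp add: algebra_simps)

lemma comm_diff_right: "comm x (y - z) = comm x y - comm x z"
  unfolding comm_def by (simp add: algebra_simps)

lemma comm_minus_right: "comm x (- y) = - comm x y"
  unfolding comm_def by simp

lemma comm_mult_right: "comm x (y * z) = comm x y * z + y * comm x z"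
  unfolding comm_def by (simp add: algebra_simps)

lemma comm_sum_right: "comm x (sum f A) = (\<Sum>i\<in>A. comm x (f i))"
  unfolding comm_def by (simp add: sum_distrib_left sum_distrib_right sum_subtractf)

lemma comm_add_left: "comm (x + y) z = comm x z + comm y z"
  unfolding comm_def by (simp add: algebra_simps)

lemma comm_of_nat_right: "comm x (of_nat n) = 0"
  unfolding comm_def by (simp add: mult_of_nat_commute)

lemma comm_swap: "comm y x = - comm x y"
  unfolding comm_def by simp

lemma comm_comm_right_eq_0:
  assumes "comm x y = 0" and "comm x z = 0"
  shows "comm x (comm y z) = 0"
proof -
  have xy: "x * y = y * x" and xz: "x * z = z * x"
    using assms unfolding comm_def by simp_all
  have "x * (y * z) = y * z * x" and "x * (z * y) = z * y * x"
    by (metis xy xz mult.assoc)+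
  then show ?thesis
    unfolding comm_def by (simp add: right_diff_distrib left_diff_distrib)
qed

lemma sum_binomial_Suc:
  fixes f :: "nat \<Rightarrow> 'a::semiring_1"
  shows "(\<Sum>l\<le>Suc k. of_nat (Suc k choose l) * f l)
    = (\<Sum>l\<le>k. of_nat (k choose l) * (f l + f (Suc l)))"
proof -
  have shift: "(\<Sum>l\<le>k. of_nat (k choose l) * f l)
      = f 0 + (\<Sum>l\<le>k. of_nat (k choose Suc l) * f (Suc l))"
  proof -
    have "(\<Sum>l\<le>k. of_nat (k choose l) * f l) = (\<Sum>l\<le>Suc k. of_nat (k choose l) * f l)"
      by (simp add: binomial_eq_0)
    also have "\<dots> = f 0 + (\<Sum>l\<le>k. of_nat (k choose Suc l) * f (Suc l))"
      by (subst sum.atMost_Suc_shift) simp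
    finally show ?thesis .
  qed
  have "(\<Sum>l\<le>Suc k. of_nat (Suc k choose l) * f l)
      = f 0 + (\<Sum>l\<le>k. of_nat (k choose l) * f (Suc l) + of_nat (k choose Suc l) * f (Suc l))"
    by (subst sum.atMost_Suc_shift) (simp add: distrib_right)
  also have "\<dots> = (\<Sum>l\<le>k. of_nat (k choose l) * (f l + f (Suc l)))"
    by (simp add: shift sum.distrib distrib_left add_ac)
  finally show ?thesis .
qed

lemmas comm_right_simps = comm_add_right comm_diff_right comm_minus_right comm_mult_right
  comm_sum_right comm_of_nat_right comm_comm_right_eq_0

locale central_scalars =
  fixes emb :: "'k::field \<Rightarrow> 'a::ring_1"
  assumes scalar_emb: "scalar_emb emb"
begin

lemma emb_1 [simp]: "emb 1 = 1"
  and emb_add: "emb (x + y) = emb x + emb y"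
  and emb_mult: "emb (x * y) = emb x * emb y"
  and emb_central: "emb x * a = a * emb x"
  using scalar_emb unfolding scalar_emb_def by blast+

lemma emb_0 [simp]: "emb 0 = 0"
  using emb_add[of 0 0] by simp

lemma emb_uminus: "emb (- x) = - emb x"
  using emb_add[of x "- x"] by (simp add: eq_neg_iff_add_eq_0 add.commute)

lemma emb_diff: "emb (x - y) = emb x - emb y"
  using emb_add[of x "- y"] by (simp add: emb_uminus)

lemma emb_of_nat: "emb (of_nat n) = of_nat n"
  by (induction n) (simp_all add: emb_add)

lemma emb_mult_left_commute: "x * (emb c * y) = emb c * (x * y)"
  by (metis emb_central mult.assoc)

lemma emb_mult_emb: "emb c * (emb d * x) = emb (c * d) * x"
  by (simp add: emb_mult mult.assoc)

lemma emb_mult_cancel_left: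
  assumes "c \<noteq> 0" and "emb c * x = emb c * y"
  shows "x = y"
proof -
  have "x = emb (inverse c) * (emb c * x)"
    using assms(1) by (simp add: emb_mult_emb)
  also have "\<dots> = y"
    using assms by (simp add: emb_mult_emb)
  finally show ?thesis .
qed

lemma comm_emb_right: "comm x (emb c) = 0"
  unfolding comm_def by (simp add: emb_central)

lemma comm_emb_mult_right: "comm x (emb c * y) = emb c * comm x y"
  unfolding comm_def by (simp add: right_diff_distrib emb_mult_left_commute mult.assoc)

lemma comm_emb_mult_left: "comm (emb c * x) y = emb c * comm x y"
  unfolding comm_def by (simp add: right_diff_distrib emb_mult_left_commute mult.assoc)

lemma qcomm_eq_comm_left: "qcomm emb p x y = emb (p - inverse p) * (y * x) + emb p * comm x y"
  unfolding qcomm_def comm_def by (simp add: emb_diff algebra_simps)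

lemma qcomm_eq_comm_right:
  "qcomm emb p x y = emb (p - inverse p) * (x * y) - emb (inverse p) * comm y x"
  unfolding qcomm_def comm_def by (simp add: emb_diff algebra_simps)

lemma qcomm_inverse_swap: "qcomm emb (inverse p) y x = - qcomm emb p x y"
  unfolding qcomm_def by simp

lemma comm_eq_of_qcomm_eq:
  assumes p: "p \<noteq> 0" "p + inverse p \<noteq> 0"
    and rel: "qcomm emb p g a = qcomm emb p a (g + emb (p + inverse p) * c)"
  shows "comm g a = emb p * (a * c) - emb (inverse p) * (c * a)"
proof (rule emb_mult_cancel_left[OF p(2)])
  have "emb p * (g * a) - emb (inverse p) * (a * g)
      = emb p * (a * g) - emb (inverse p) * (g * a)
        + emb (p + inverse p) * (emb p * (a * c) - emb (inverse p) * (c * a))"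
    using rel unfolding qcomm_def
    by (simp add: algebra_simps emb_add emb_mult_emb emb_mult_left_commute[of a]
        emb_mult_left_commute[of g] emb_mult_left_commute[of c] p(1))
  then show "emb (p + inverse p) * comm g a
      = emb (p + inverse p) * (emb p * (a * c) - emb (inverse p) * (c * a))"
    unfolding comm_def by (simp add: algebra_simps emb_add)
qed

definition qbinom_sum :: "'k \<Rightarrow> (int \<Rightarrow> 'a) \<Rightarrow> nat \<Rightarrow> int \<Rightarrow> 'a" where
  "qbinom_sum p b k r = (\<Sum>l\<le>k.
      of_nat (k choose l) * (emb (p powi (int k - 2 * int l)) * b (int k - 2 * int l + r)))"

lemma of_nat_mult_emb_commute: "of_nat n * (emb c * x) = emb c * (of_nat n * x)"
  by (metis emb_of_nat emb_mult_emb mult.commute)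

lemma qbinom_sum_Suc:
  assumes "p \<noteq> 0"
  shows "qbinom_sum p b (Suc k) r
    = emb p * qbinom_sum p b k (r + 1) + emb (inverse p) * qbinom_sum p b k (r - 1)"
proof -
  have up: "emb (p powi (int (Suc k) - 2 * int l)) * b (int (Suc k) - 2 * int l + r)
      = emb p * (emb (p powi (int k - 2 * int l)) * b (int k - 2 * int l + (r + 1)))" for l
  proof -
    have "int (Suc k) - 2 * int l = (int k - 2 * int l) + 1" by simp
    then have "p powi (int (Suc k) - 2 * int l) = p * p powi (int k - 2 * int l)"
      using power_int_add_1' assms by metis
    then show ?thesis by (simp add: emb_mult_emb algebra_simps)
  qed
  have down: "emb (p powi (int (Suc k) - 2 * int (Suc l))) * b (int (Suc k) - 2 * int (Suc l) + r)
      = emb (inverse p) * (emb (p powi (int k - 2 * int l)) * b (int k - 2 * int l + (r - 1)))" for l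
  proof -
    have "int (Suc k) - 2 * int (Suc l) = (int k - 2 * int l) + (- 1)" by simp
    then have "p powi (int (Suc k) - 2 * int (Suc l)) = inverse p * p powi (int k - 2 * int l)"
      using power_int_add[of p "int k - 2 * int l" "- 1"] assms by (simp add: mult.commute)
    then show ?thesis by (simp add: emb_mult_emb algebra_simps)
  qed
  show ?thesis
    unfolding qbinom_sum_def sum_binomial_Suc down unfolding up
    by (simp add: distrib_left sum.distrib sum_distrib_left of_nat_mult_emb_commute)
qed

lemma qbinom_sum_shift_diff:
  assumes "\<And>m. b (m + 1) - b (m - 1) = emb c * comm d (b m)"
  shows "qbinom_sum p b k (r + 1) - qbinom_sum p b k (r - 1) = emb c * comm d (qbinom_sum p b k r)"
proof -
  have "b (int k - 2 * int l + (r + 1)) - b (int k - 2 * int l + (r - 1))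
      = emb c * comm d (b (int k - 2 * int l + r))" for l
    using assms[of "int k - 2 * int l + r"] by (simp add: add.assoc add_diff_eq)
  then show ?thesis
    unfolding qbinom_sum_def
    by (simp add: comm_right_simps comm_emb_mult_right comm_emb_right sum_distrib_left
        of_nat_mult_emb_commute emb_mult_emb mult.commute
        flip: sum_subtractf right_diff_distrib)
qed

lemma comm_qbinom_sum_eq_0:
  assumes "\<And>m. comm z (b m) = 0"
  shows "comm z (qbinom_sum p b k r) = 0"
  unfolding qbinom_sum_def by (simp add: comm_right_simps comm_emb_mult_right comm_emb_right assms)

end

lemma Bt1_eq_Bt0: "Bt1 emb q W j = Bt0 emb q W (- j - 1)"
  unfolding Bt1_def Bt0_def by auto

lemma Bt0_recurrence:
  "Bt0 emb q W (m + 1) - Bt0 emb q W (m - 1)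
    = emb (Bcoef q) * comm (Bdelta emb q W) (Bt0 emb q W m)"
proof -
  consider "m \<ge> 1" | "m = 0" | "m = -1" | "m \<le> -2" by linarith
  then show ?thesis
  proof cases
    case 1
    define n where "n = nat (m - 1)"
    have "nat (m + 1) = Suc (Suc n)" and "nat m = Suc n" and "nat (m - 1) = n"
      using 1 unfolding n_def by simp_all
    with 1 show ?thesis
      by (simp add: Bt0_def)
  next
    case 4
    define n where "n = nat (- m - 2)"
    have "nat (- (m + 1) - 1) = n" and "nat (- m - 1) = Suc n" and "nat (- (m - 1) - 1) = Suc (Suc n)"
      using 4 unfolding n_def by simp_all
    with 4 show ?thesis
      by (simp add: Bt0_def)
  qed (simp_all add: Bt0_def)
qed

locale Oq = central_scalars emb for emb :: "'k::field \<Rightarrow> 'a::ring_1" +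
  fixes q :: 'k and W :: "int \<Rightarrow> 'a" and G Gt :: "nat \<Rightarrow> 'a"
  assumes q_nonzero: "q \<noteq> 0" and q_square: "q ^ 2 \<noteq> 1" and q_fourth: "q ^ 4 \<noteq> 1"
    and relations: "Oq_relations emb q W G Gt"
begin

lemma q_diff_inverse_nonzero: "q - inverse q \<noteq> 0"
  using q_nonzero q_square by (auto simp: field_simps power2_eq_square)

lemma qint_2_eq: "qint q 2 = q + inverse q"
  using q_diff_inverse_nonzero unfolding qint_def
  by (simp add: field_simps power2_eq_square)

lemma qint_2_nonzero: "qint q 2 \<noteq> 0"
proof
  assume "qint q 2 = 0"
  then have "q * q = - 1"
    using q_nonzero unfolding qint_2_eq by (simp add: field_simps eq_neg_iff_add_eq_0 add.commute)
  then have "q ^ 4 = 1"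
    by (simp add: power4_eq_xxxx mult.assoc flip: mult.assoc[of q q])
  with q_fourth show False by simp
qed

lemma q_plus_inverse_nonzero: "q + inverse q \<noteq> 0"
  using qint_2_nonzero unfolding qint_2_eq .

lemma rho_eq: "rho q = - (((q - inverse q) * qint q 2) ^ 2)"
  unfolding rho_def qint_2_eq by (simp add: power2_eq_square algebra_simps)

lemma Bcoef_eq: "Bcoef q = q / ((q - inverse q) ^ 2 * qint q 2)"
  unfolding Bcoef_def qint_2_eq by (simp add: power2_eq_square algebra_simps)

lemma rho_nonzero: "rho q \<noteq> 0"
  using q_diff_inverse_nonzero qint_2_nonzero unfolding rho_eq by simp

lemma rel_W0_W1: "comm (W 0) (W 1) = emb (inverse (qint q 2)) * (Gt 1 - G 1)"
  using relations unfolding Oq_relations_def by (metis add_0 of_nat_0)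

lemma rel_G1_W1: "qcomm emb q (G 1) (W 1) = qcomm emb q (W 1) (Gt 1)"
  using relations unfolding Oq_relations_def by (metis add_0 of_nat_0)

lemma rel_W0_G1: "qcomm emb q (W 0) (G 1) = qcomm emb q (Gt 1) (W 0)"
  using relations unfolding Oq_relations_def by (metis add_0 of_nat_0)

lemma rel_G_W1:
  "qcomm emb q (G (m + 1)) (W 1) = emb (rho q) * W (int m + 2) - emb (rho q) * W (- int m)"
  using relations unfolding Oq_relations_def by blast

lemma rel_W0_G:
  "qcomm emb q (W 0) (G (m + 1)) = emb (rho q) * W (- int m - 1) - emb (rho q) * W (int m + 1)"
  using relations unfolding Oq_relations_def by blast

lemma rel_G_W1_comm: "comm (G (m + 1)) (W 1) = comm (G 1) (W (int m + 1))"
proof -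
  have "comm (W (int m + 1)) (G (0 + 1)) + comm (G (m + 1)) (W (int 0 + 1)) = 0"
    using relations unfolding Oq_relations_def by blast
  then have "comm (G (m + 1)) (W 1) = - comm (W (int m + 1)) (G 1)"
    by (simp add: eq_neg_iff_add_eq_0 add.commute)
  then show ?thesis by (simp only: comm_swap[of "W (int m + 1)" "G 1"] minus_minus)
qed

lemma rel_G_W0_comm: "comm (G (m + 1)) (W 0) = comm (G 1) (W (- int m))"
proof -
  have "comm (W (- int m)) (G (0 + 1)) + comm (G (m + 1)) (W (- int 0)) = 0"
    using relations unfolding Oq_relations_def by blast
  then have "comm (G (m + 1)) (W 0) = - comm (W (- int m)) (G 1)"
    by (simp add: eq_neg_iff_add_eq_0 add.commute)
  then show ?thesis by (simp only: comm_swap[of "W (- int m)" "G 1"] minus_minus)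
qed

lemma rel_G1_G: "comm (G 1) (G (j + 1)) = 0"
  using relations unfolding Oq_relations_def by (metis add_0)

lemma Gt1_eq: "Gt 1 = G 1 + emb (q + inverse q) * comm (W 0) (W 1)"
  using qint_2_nonzero unfolding rel_W0_W1 qint_2_eq[symmetric]
  by (simp add: emb_mult_emb)

lemma comm_G1_W1:
  "comm (G 1) (W 1) = emb q * (W 1 * comm (W 0) (W 1)) - emb (inverse q) * (comm (W 0) (W 1) * W 1)"
  using rel_G1_W1 unfolding Gt1_eq
  by (rule comm_eq_of_qcomm_eq[OF q_nonzero q_plus_inverse_nonzero])

(* The relation for W_0 is the one for W_1 with q replaced by q^-1. *)
lemma comm_G1_W0:
  "comm (G 1) (W 0) = emb (inverse q) * (W 0 * comm (W 0) (W 1)) - emb q * (comm (W 0) (W 1) * W 0)"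
proof -
  have "qcomm emb (inverse q) (G 1) (W 0)
      = qcomm emb (inverse q) (W 0) (G 1 + emb (inverse q + inverse (inverse q)) * comm (W 0) (W 1))"
    using rel_W0_G1 unfolding qcomm_inverse_swap Gt1_eq by (simp add: add.commute)
  from comm_eq_of_qcomm_eq[OF _ _ this] show ?thesis
    using q_nonzero q_plus_inverse_nonzero by (simp add: add.commute)
qed

definition Z :: 'a where
  "Z = G 1 + emb q * Bdelta emb q W"

lemma q_mult_inverse_square: "q * inverse q ^ 2 = inverse q"
  using q_nonzero by (simp add: power2_eq_square)

lemma comm_Z_W1: "comm Z (W 1) = 0"
  unfolding Z_def comm_add_left comm_emb_mult_left comm_G1_W1
  unfolding Bdelta_def comm_def
  by (simp add: algebra_simps emb_mult_emb q_mult_inverse_square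
      emb_mult_left_commute[of "W 0"] emb_mult_left_commute[of "W 1"])

lemma comm_Z_W0: "comm Z (W 0) = 0"
  unfolding Z_def comm_add_left comm_emb_mult_left comm_G1_W0
  unfolding Bdelta_def comm_def
  by (simp add: algebra_simps emb_mult_emb q_mult_inverse_square
      emb_mult_left_commute[of "W 0"] emb_mult_left_commute[of "W 1"])

lemma comm_Z_Bdelta: "comm Z (Bdelta emb q W) = 0"
  unfolding Bdelta_def
  by (simp add: comm_right_simps comm_emb_mult_right comm_emb_right comm_Z_W0 comm_Z_W1)

lemma comm_Z_Ba0: "comm Z (Ba0 emb q W n) = 0"
proof -
  have "comm Z (Ba0 emb q W n) = 0 \<and> comm Z (Ba0 emb q W (Suc n)) = 0"
    by (induction n) (simp_all add: comm_right_simps comm_emb_mult_right comm_emb_right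
        comm_Z_W0 comm_Z_W1 comm_Z_Bdelta)
  then show ?thesis ..
qed

lemma comm_Z_Ba1: "comm Z (Ba1 emb q W n) = 0"
proof -
  have "comm Z (Ba1 emb q W n) = 0 \<and> comm Z (Ba1 emb q W (Suc n)) = 0"
    by (induction n) (simp_all add: comm_right_simps comm_emb_mult_right comm_emb_right
        comm_Z_W0 comm_Z_W1 comm_Z_Bdelta)
  then show ?thesis ..
qed

lemma comm_Z_Bt0: "comm Z (Bt0 emb q W m) = 0"
  unfolding Bt0_def by (simp add: comm_Z_Ba0 comm_Z_Ba1)

lemma comm_G1_eq: "comm Z x = 0 \<Longrightarrow> comm (G 1) x = - (emb q * comm (Bdelta emb q W) x)"
  unfolding Z_def comm_add_left comm_emb_mult_left by (simp add: eq_neg_iff_add_eq_0)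

definition Bsum0 :: "nat \<Rightarrow> 'a" where
  "Bsum0 k = (\<Sum>l\<le>k. emb (of_nat (k choose l) * q powi (int k - 2 * int l)
      * inverse (qint q 2 ^ (k + 2))) * Bt0 emb q W (int k - 2 * int l))"

definition Bsum1 :: "nat \<Rightarrow> 'a" where
  "Bsum1 k = (\<Sum>l\<le>k. emb (of_nat (k choose l) * q powi (2 * int l - int k)
      * inverse (qint q 2 ^ (k + 2))) * Bt1 emb q W (int k - 2 * int l))"

lemma Bsum0_eq: "Bsum0 k = emb (inverse (qint q 2 ^ (k + 2))) * qbinom_sum q (Bt0 emb q W) k 0"
  unfolding Bsum0_def qbinom_sum_def sum_distrib_left
  by (rule sum.cong) (simp_all add: emb_mult_emb mult.commute mult.left_commute flip: emb_of_nat)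

lemma Bsum1_eq: "Bsum1 k = emb (inverse (qint q 2 ^ (k + 2))) * qbinom_sum q (Bt0 emb q W) k (- 1)"
proof -
  have "Bsum1 k = (\<Sum>l\<le>k. emb (of_nat (k choose (k - l)) * q powi (2 * int (k - l) - int k)
      * inverse (qint q 2 ^ (k + 2))) * Bt1 emb q W (int k - 2 * int (k - l)))"
    unfolding Bsum1_def
    by (rule sum.reindex_bij_witness[where i="\<lambda>l. k - l" and j="\<lambda>l. k - l"]) auto
  also have "\<dots> = emb (inverse (qint q 2 ^ (k + 2))) * qbinom_sum q (Bt0 emb q W) k (- 1)"
    unfolding qbinom_sum_def sum_distrib_left
  proof (rule sum.cong)
    fix l assume "l \<in> {..k}"
    then have l: "l \<le> k" by simp
    then have "k choose (k - l) = k choose l" and "2 * int (k - l) - int k = int k - 2 * int l"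
      and "- (int k - 2 * int (k - l)) - 1 = int k - 2 * int l + - 1"
      by (simp_all add: binomial_symmetric[symmetric] of_nat_diff)
    then show "emb (of_nat (k choose (k - l)) * q powi (2 * int (k - l) - int k)
          * inverse (qint q 2 ^ (k + 2))) * Bt1 emb q W (int k - 2 * int (k - l))
        = emb (inverse (qint q 2 ^ (k + 2))) * (of_nat (k choose l)
          * (emb (q powi (int k - 2 * int l)) * Bt0 emb q W (int k - 2 * int l + - 1)))"
      by (simp add: Bt1_eq_Bt0 emb_mult_emb mult.commute mult.left_commute flip: emb_of_nat)
  qed simp
  finally show ?thesis .
qed

lemma Bsum0_Suc:
  "Bsum0 (Suc k) = Bsum1 k + emb (q * Bcoef q / qint q 2) * comm (Bdelta emb q W) (Bsum0 k)"
proof -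
  define E where "E = qbinom_sum q (Bt0 emb q W) k"
  have "E (0 + 1) - E (0 - 1) = emb (Bcoef q) * comm (Bdelta emb q W) (E 0)"
    unfolding E_def by (rule qbinom_sum_shift_diff[OF Bt0_recurrence])
  then have "E 1 = E (- 1) + emb (Bcoef q) * comm (Bdelta emb q W) (E 0)"
    by (simp add: diff_eq_eq add.commute)
  then have Suc_k: "qbinom_sum q (Bt0 emb q W) (Suc k) 0
      = emb (qint q 2) * E (- 1) + emb (q * Bcoef q) * comm (Bdelta emb q W) (E 0)"
    unfolding qbinom_sum_Suc[OF q_nonzero] E_def[symmetric] qint_2_eq
    by (simp add: distrib_left distrib_right emb_add emb_mult_emb)
  show ?thesis
    unfolding Bsum0_eq Bsum1_eq E_def[symmetric] comm_emb_mult_right Suc_k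
    using qint_2_nonzero by (simp add: distrib_left emb_mult_emb field_simps)
qed

lemma Bsum1_Suc:
  "Bsum1 (Suc k) = Bsum0 k - emb (Bcoef q / (q * qint q 2)) * comm (Bdelta emb q W) (Bsum1 k)"
proof -
  define E where "E = qbinom_sum q (Bt0 emb q W) k"
  have "E (- 1 + 1) - E (- 1 - 1) = emb (Bcoef q) * comm (Bdelta emb q W) (E (- 1))"
    unfolding E_def by (rule qbinom_sum_shift_diff[OF Bt0_recurrence])
  then have "E (- 2) = E 0 - emb (Bcoef q) * comm (Bdelta emb q W) (E (- 1))"
    by (simp add: eq_diff_eq diff_eq_eq add.commute)
  then have Suc_k: "qbinom_sum q (Bt0 emb q W) (Suc k) (- 1)
      = emb (qint q 2) * E 0 - emb (inverse q * Bcoef q) * comm (Bdelta emb q W) (E (- 1))"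
    unfolding qbinom_sum_Suc[OF q_nonzero] E_def[symmetric] qint_2_eq
    by (simp add: right_diff_distrib distrib_right emb_add emb_mult_emb)
  show ?thesis
    unfolding Bsum0_eq Bsum1_eq E_def[symmetric] comm_emb_mult_right Suc_k
    using q_nonzero qint_2_nonzero by (simp add: right_diff_distrib emb_mult_emb field_simps)
qed

lemma Bsum0_0: "Bsum0 0 = emb (inverse (qint q 2 ^ 2)) * W 1"
  unfolding Bsum0_def by (simp add: Bt0_def power2_eq_square)

lemma Bsum1_0: "Bsum1 0 = emb (inverse (qint q 2 ^ 2)) * W 0"
  unfolding Bsum1_def by (simp add: Bt1_def power2_eq_square)

lemma comm_Z_Bsum0: "comm Z (Bsum0 k) = 0"
  unfolding Bsum0_eq comm_emb_mult_right by (simp add: comm_qbinom_sum_eq_0 comm_Z_Bt0)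

lemma comm_Z_Bsum1: "comm Z (Bsum1 k) = 0"
  unfolding Bsum1_eq comm_emb_mult_right by (simp add: comm_qbinom_sum_eq_0 comm_Z_Bt0)

definition Gconv :: "(nat \<Rightarrow> 'a) \<Rightarrow> nat \<Rightarrow> 'a" where
  "Gconv F n = (\<Sum>k\<le>n. F k * Gext emb q G (n - k))"

lemma Gconv_Suc: "Gconv F (Suc n) = F 0 * G (Suc n) + Gconv (\<lambda>k. F (Suc k)) n"
proof -
  have Gext_Suc: "Gext emb q G (Suc n) = G (Suc n)"
    by (simp add: Gext_def)
  show ?thesis
    unfolding Gconv_def sum.atMost_Suc_shift diff_Suc_Suc diff_zero Gext_Suc ..
qed

lemma Gconv_add: "Gconv (\<lambda>k. F k + H k) n = Gconv F n + Gconv H n"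
  unfolding Gconv_def by (simp add: distrib_right sum.distrib)

lemma Gconv_diff: "Gconv (\<lambda>k. F k - H k) n = Gconv F n - Gconv H n"
  unfolding Gconv_def by (simp add: left_diff_distrib sum_subtractf)

lemma Gconv_emb_mult: "Gconv (\<lambda>k. emb c * F k) n = emb c * Gconv F n"
  unfolding Gconv_def by (simp add: sum_distrib_left mult.assoc)

lemma comm_G1_Gext: "comm (G 1) (Gext emb q G j) = 0"
  using rel_G1_G[of "j - 1"] by (cases j) (simp_all add: Gext_def comm_emb_right)

lemma comm_G1_Gconv:
  assumes "\<And>k. comm Z (F k) = 0"
  shows "comm (G 1) (Gconv F n) = - (emb q * Gconv (\<lambda>k. comm (Bdelta emb q W) (F k)) n)"
  unfolding Gconv_def comm_sum_right comm_mult_right comm_G1_Gext comm_G1_eq[OF assms]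
  by (simp add: sum_negf sum_distrib_left mult.assoc)

lemma coefficient_identities:
  "- (rho q * inverse (q - inverse q)) * inverse (qint q 2 ^ 2) = q - inverse q"
  "- (rho q * inverse (q - inverse q)) * (q * Bcoef q / qint q 2)
    = q * (inverse (q - inverse q) * q)"
  "- (rho q * inverse (q - inverse q)) * (Bcoef q / (q * qint q 2))
    = inverse q * (inverse (q - inverse q) * q)"
  "- inverse (q - inverse q) * (- (q - inverse q) * qint q 2 ^ 2 * inverse (qint q 2 ^ 2)) = 1"
proof -
  have "- (- ((d * t) ^ 2) * inverse d) * inverse (t ^ 2) = d
    \<and> - (- ((d * t) ^ 2) * inverse d) * (q * (q / (d ^ 2 * t)) / t) = q * (inverse d * q)
    \<and> - (- ((d * t) ^ 2) * inverse d) * (q / (d ^ 2 * t) / (q * t)) = inverse q * (inverse d * q)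
    \<and> - inverse d * (- d * t ^ 2 * inverse (t ^ 2)) = 1"
    if "d \<noteq> 0" and "t \<noteq> 0" for d t :: 'k
    using that q_nonzero by (simp add: field_simps power2_eq_square)
  from this[OF q_diff_inverse_nonzero qint_2_nonzero]
  show "- (rho q * inverse (q - inverse q)) * inverse (qint q 2 ^ 2) = q - inverse q"
    "- (rho q * inverse (q - inverse q)) * (q * Bcoef q / qint q 2)
      = q * (inverse (q - inverse q) * q)"
    "- (rho q * inverse (q - inverse q)) * (Bcoef q / (q * qint q 2))
      = inverse q * (inverse (q - inverse q) * q)"
    "- inverse (q - inverse q) * (- (q - inverse q) * qint q 2 ^ 2 * inverse (qint q 2 ^ 2)) = 1"
    unfolding rho_eq Bcoef_eq by blast+
qed

lemma Gconv_0: "Gconv F 0 = emb (- (q - inverse q) * qint q 2 ^ 2) * F 0"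
  unfolding Gconv_def Gext_def by (simp add: emb_central)

lemma W_expansion_0:
  "W 1 = - emb (inverse (q - inverse q)) * Gconv Bsum0 0"
  "W 0 = - emb (inverse (q - inverse q)) * Gconv Bsum1 0"
proof -
  note unit = coefficient_identities(4)
  show "W 1 = - emb (inverse (q - inverse q)) * Gconv Bsum0 0"
    "W 0 = - emb (inverse (q - inverse q)) * Gconv Bsum1 0"
    unfolding Gconv_0 Bsum0_0 Bsum1_0
    by (simp_all only: emb_uminus[symmetric] emb_mult_emb unit emb_1 mult_1_left)
qed

lemma W_expansion_Suc_pos:
  assumes pos: "W (int m + 1) = - emb (inverse (q - inverse q)) * Gconv Bsum0 m"
    and neg: "W (- int m) = - emb (inverse (q - inverse q)) * Gconv Bsum1 m"
  shows "W (int m + 2) = - emb (inverse (q - inverse q)) * Gconv Bsum0 (Suc m)"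
proof -
  define \<kappa> where "\<kappa> = inverse (q - inverse q)"
  define D where "D = Gconv (\<lambda>k. comm (Bdelta emb q W) (Bsum0 k)) m"
  have comm_G_W1: "comm (G (m + 1)) (W 1) = emb (\<kappa> * q) * D"
    unfolding rel_G_W1_comm pos D_def \<kappa>_def[symmetric] mult_minus_left comm_minus_right
      comm_emb_mult_right comm_G1_Gconv[OF comm_Z_Bsum0]
    by (simp add: emb_mult_emb)
  note W_coeff = coefficient_identities(1)[folded \<kappa>_def]
    and D_coeff = coefficient_identities(2)[folded \<kappa>_def]
  have "emb (rho q) * W (int m + 2) = emb (rho q) * W (- int m) + qcomm emb q (G (m + 1)) (W 1)"
    unfolding rel_G_W1 by simp
  also have "\<dots> = emb (- (rho q * \<kappa>)) * Gconv Bsum1 m + emb (q - inverse q) * (W 1 * G (m + 1))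
      + emb (q * (\<kappa> * q)) * D"
    unfolding neg qcomm_eq_comm_left comm_G_W1 \<kappa>_def[symmetric]
    by (simp add: emb_mult_emb emb_uminus)
  also have "\<dots> = emb (- (rho q * \<kappa>)) * (emb (inverse (qint q 2 ^ 2)) * (W 1 * G (m + 1))
      + Gconv Bsum1 m + emb (q * Bcoef q / qint q 2) * D)"
    unfolding distrib_left emb_mult_emb W_coeff D_coeff by (simp only: add_ac)
  also have "\<dots> = emb (rho q) * (- emb \<kappa> * Gconv Bsum0 (Suc m))"
    unfolding Gconv_Suc Bsum0_Suc Gconv_add Gconv_emb_mult Bsum0_0 D_def[symmetric]
    by (simp add: emb_mult_emb emb_uminus mult.assoc add.assoc)
  finally have "W (int m + 2) = - emb \<kappa> * Gconv Bsum0 (Suc m)"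
    by (rule emb_mult_cancel_left[OF rho_nonzero])
  then show ?thesis
    by (simp only: \<kappa>_def)
qed

lemma W_expansion_Suc_neg:
  assumes pos: "W (int m + 1) = - emb (inverse (q - inverse q)) * Gconv Bsum0 m"
    and neg: "W (- int m) = - emb (inverse (q - inverse q)) * Gconv Bsum1 m"
  shows "W (- int m - 1) = - emb (inverse (q - inverse q)) * Gconv Bsum1 (Suc m)"
proof -
  define \<kappa> where "\<kappa> = inverse (q - inverse q)"
  define D where "D = Gconv (\<lambda>k. comm (Bdelta emb q W) (Bsum1 k)) m"
  have comm_G_W0: "comm (G (m + 1)) (W 0) = emb (\<kappa> * q) * D"
    unfolding rel_G_W0_comm neg D_def \<kappa>_def[symmetric] mult_minus_left comm_minus_right
      comm_emb_mult_right comm_G1_Gconv[OF comm_Z_Bsum1]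
    by (simp add: emb_mult_emb)
  note W_coeff = coefficient_identities(1)[folded \<kappa>_def]
    and D_coeff = coefficient_identities(3)[folded \<kappa>_def]
  have "emb (rho q) * W (- int m - 1) = emb (rho q) * W (int m + 1) + qcomm emb q (W 0) (G (m + 1))"
    unfolding rel_W0_G by simp
  also have "\<dots> = emb (- (rho q * \<kappa>)) * Gconv Bsum0 m + emb (q - inverse q) * (W 0 * G (m + 1))
      - emb (inverse q * (\<kappa> * q)) * D"
    unfolding pos qcomm_eq_comm_right comm_G_W0 \<kappa>_def[symmetric]
    by (simp add: emb_mult_emb emb_uminus)
  also have "\<dots> = emb (- (rho q * \<kappa>)) * (emb (inverse (qint q 2 ^ 2)) * (W 0 * G (m + 1))
      + Gconv Bsum0 m - emb (Bcoef q / (q * qint q 2)) * D)"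
    unfolding distrib_left right_diff_distrib emb_mult_emb W_coeff D_coeff by (simp only: add_ac)
  also have "\<dots> = emb (rho q) * (- emb \<kappa> * Gconv Bsum1 (Suc m))"
    unfolding Gconv_Suc Bsum1_Suc Gconv_diff Gconv_emb_mult Bsum1_0 D_def[symmetric]
    by (simp add: emb_mult_emb emb_uminus mult.assoc add_diff_eq)
  finally have "W (- int m - 1) = - emb \<kappa> * Gconv Bsum1 (Suc m)"
    by (rule emb_mult_cancel_left[OF rho_nonzero])
  then show ?thesis
    by (simp only: \<kappa>_def)
qed

lemma W_expansion:
  "W (int n + 1) = - emb (inverse (q - inverse q)) * Gconv Bsum0 n
   \<and> W (- int n) = - emb (inverse (q - inverse q)) * Gconv Bsum1 n"
proof (induction n)
  case 0
  show ?case using W_expansion_0 by simp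
next
  case (Suc m)
  have "int (Suc m) + 1 = int m + 2" and "- int (Suc m) = - int m - 1"
    by simp_all
  then show ?case
    using Suc.IH W_expansion_Suc_pos W_expansion_Suc_neg by metis
qed

end

theorem proposition12p3:
  fixes emb :: "'k::field \<Rightarrow> 'a::ring_1"
    and q :: 'k
    and W :: "int \<Rightarrow> 'a" and G Gt :: "nat \<Rightarrow> 'a"
  assumes "scalar_emb emb"
    and "q \<noteq> 0"
    and "\<forall>m::nat. m \<ge> 1 \<longrightarrow> q ^ m \<noteq> 1"
    and "Oq_relations emb q W G Gt"
  shows "\<forall>n::nat.
      W (int n + 1) = - emb (inverse (q - inverse q)) *
        (\<Sum>k\<le>n. \<Sum>l\<le>k. emb (of_nat (k choose l) * q powi (int k - 2 * int l) * inverse (qint q 2 ^ (k + 2)))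
            * Bt0 emb q W (int k - 2 * int l) * Gext emb q G (n - k))
    \<and> W (- int n) = - emb (inverse (q - inverse q)) *
        (\<Sum>k\<le>n. \<Sum>l\<le>k. emb (of_nat (k choose l) * q powi (2 * int l - int k) * inverse (qint q 2 ^ (k + 2)))
            * Bt1 emb q W (int k - 2 * int l) * Gext emb q G (n - k))"
proof -
  interpret Oq emb q W G Gt
    using assms by unfold_locales auto
  show ?thesis
    using W_expansion unfolding Gconv_def Bsum0_def Bsum1_def sum_distrib_right by blast
qed

end
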